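(* Let $L$ be an $n\times n$ nonsingular M-matrix with integer entries. A vector $f\in\mathbb{Z}^n$ with $f\ge 0$ is $z$-superstable with respect to $L$ if and only if $f$ is the minimizer of $\min_{g\sim f,\ g\ge 0}E(g)$ (minimum over $g\in\mathbb{Z}^n$).
   Context: A Z-matrix is a square real matrix whose off-diagonal entries are all $\le 0$. A nonsingular M-matrix is a Z-matrix $L$ that is invertible with $L^{-1}$ having all entries nonnegative. Vector inequalities are entrywise. For $f,g\in\mathbb{Z}^n$, $f\sim g$ means $g-f=Lz$ for some $z\in\mathbb{Z}^n$. For $q\in\mathbb{Z}^n$, $E(q)=\|L^{-1}q\|_2^2$ with $\|v\|_2^2=v\cdot v$. A vector $f\in\mathbb{Z}^n$ with $f\ge 0$ is $z$-superstable with respect to $L$ if for every $z\in\mathbb{Z}^n$ with $z\ge0$ and $z\ne0$ there exists $i$ with $f_i-(Lz)_i<0$. *)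

theory Defs
  imports "HOL-Analysis.Analysis"
begin

definition real_mat :: "int ^'n ^'n \<Rightarrow> real ^'n ^'n" where
  "real_mat L = (\<chi> i j. real_of_int (L $ i $ j))"

definition real_vec :: "int ^'n \<Rightarrow> real ^'n" where
  "real_vec v = (\<chi> i. real_of_int (v $ i))"

definition z_matrix :: "'a::{zero,order} ^'n ^'n \<Rightarrow> bool" where
  "z_matrix L \<longleftrightarrow> (\<forall>i j. i \<noteq> j \<longrightarrow> L $ i $ j \<le> 0)"

definition nonsing_M_matrix :: "int ^'n ^'n \<Rightarrow> bool" where
  "nonsing_M_matrix L \<longleftrightarrow> z_matrix L \<and> invertible (real_mat L) \<and>
     (\<forall>i j. matrix_inv (real_mat L) $ i $ j \<ge> 0)"

definition L_equiv :: "int ^'n ^'n \<Rightarrow> int ^'n \<Rightarrow> int ^'n \<Rightarrow> bool" where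
  "L_equiv L f g \<longleftrightarrow> (\<exists>z :: int ^'n. g - f = L *v z)"

definition energy :: "int ^'n ^'n \<Rightarrow> int ^'n \<Rightarrow> real" where
  "energy L q = (let v = matrix_inv (real_mat L) *v real_vec q in v \<bullet> v)"

definition nonneg_vec :: "int ^'n \<Rightarrow> bool" where
  "nonneg_vec v \<longleftrightarrow> (\<forall>i. v $ i \<ge> 0)"

definition z_superstable :: "int ^'n ^'n \<Rightarrow> int ^'n \<Rightarrow> bool" where
  "z_superstable L f \<longleftrightarrow> nonneg_vec f \<and>
     (\<forall>z :: int ^'n. nonneg_vec z \<and> z \<noteq> 0 \<longrightarrow> (\<exists>i. f $ i - (L *v z) $ i < 0))"

end

theory Submission
  imports Defs
begin

text \<open>Write \<open>x = L\<inverse> f\<close>, which is nonnegative since \<open>L\<inverse> \<ge> 0\<close>. Every \<open>g \<sim> f\<close> is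
  \<open>g = f + L z\<close> with \<open>L\<inverse> g = x + z\<close>, so \<open>E(g) = \<parallel>x + z\<parallel>\<^sup>2\<close>.
  If \<open>f\<close> is superstable and \<open>g \<ge> 0\<close>, the Z-matrix sign pattern shows that the negative part
  \<open>w\<close> of \<open>z\<close> satisfies \<open>f - L w \<ge> 0\<close>, so \<open>w = 0\<close>; then \<open>z \<ge> 0\<close> and \<open>\<parallel>x + z\<parallel> > \<parallel>x\<parallel>\<close>.
  Conversely a witness \<open>z \<ge> 0\<close>, \<open>z \<noteq> 0\<close> with \<open>f - L z \<ge> 0\<close> gives \<open>g = f - L z\<close> with
  \<open>0 \<le> L\<inverse> g = x - z \<le> x\<close>, hence \<open>E(g) \<le> E(f)\<close>.\<close>

definition L_solve :: "int ^'n ^'n \<Rightarrow> int ^'n \<Rightarrow> real ^'n" where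
  "L_solve L q = matrix_inv (real_mat L) *v real_vec q"

lemma energy_eq_L_solve: "energy L q = L_solve L q \<bullet> L_solve L q"
  by (simp add: energy_def L_solve_def Let_def)

lemma matrix_inv_mult_cancel:
  assumes "invertible (A :: real ^'n ^'n)"
  shows "matrix_inv A *v (A *v v) = v"
proof -
  have "A ** matrix_inv A = mat 1 \<and> matrix_inv A ** A = mat 1"
    using assms unfolding invertible_def matrix_inv_def by (rule someI_ex)
  then show ?thesis by (simp add: matrix_vector_mul_assoc)
qed

lemma real_vec_add: "real_vec (a + b) = real_vec a + real_vec b"
  by (simp add: real_vec_def vec_eq_iff)

lemma real_vec_matrix_vector_mult: "real_vec (L *v z) = real_mat L *v real_vec z"
  by (simp add: real_vec_def real_mat_def matrix_vector_mult_def vec_eq_iff)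

lemma matrix_vector_mult_eq_0D:
  assumes "invertible (real_mat L)" and "L *v z = 0"
  shows "z = 0"
proof -
  have "real_vec z = matrix_inv (real_mat L) *v real_vec (L *v z)"
    by (simp add: real_vec_matrix_vector_mult matrix_inv_mult_cancel[OF assms(1)])
  moreover have "real_vec (L *v z) = 0"
    using assms(2) by (simp add: real_vec_def vec_eq_iff)
  ultimately have "real_vec z = 0"
    by simp
  then show ?thesis
    by (simp add: real_vec_def vec_eq_iff)
qed

lemma L_solve_shift:
  assumes "invertible (real_mat L)"
  shows "L_solve L (f + L *v z) = L_solve L f + real_vec z"
  by (simp add: L_solve_def real_vec_add real_vec_matrix_vector_mult
      matrix_vector_right_distrib matrix_inv_mult_cancel[OF assms])

lemma L_solve_nonneg:
  assumes "nonsing_M_matrix L" and "nonneg_vec q"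
  shows "L_solve L q $ i \<ge> 0"
  using assms unfolding nonsing_M_matrix_def nonneg_vec_def L_solve_def
  by (auto simp: matrix_vector_mult_def real_vec_def intro!: sum_nonneg)

lemma z_matrix_mult_nonpos:
  assumes "z_matrix L" and "nonneg_vec v" and "v $ i = 0"
  shows "(L *v v) $ i \<le> 0"
proof -
  have "L $ i $ j * v $ j \<le> 0" for j
  proof (cases "j = i")
    case False
    then show ?thesis
      using assms(1,2) unfolding z_matrix_def nonneg_vec_def by (simp add: mult_nonpos_nonneg)
  qed (use assms(3) in simp)
  then show ?thesis
    by (simp add: matrix_vector_mult_def sum_nonpos)
qed

lemma inner_self_mono:
  fixes x y :: "real ^'n"
  assumes "\<And>i. 0 \<le> x $ i" and "\<And>i. x $ i \<le> y $ i"
  shows "x \<bullet> x \<le> y \<bullet> y"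
proof -
  have "x $ i * x $ i \<le> y $ i * y $ i" for i
    using assms[of i] by (intro mult_mono) auto
  then show ?thesis
    unfolding inner_vec_def by (intro sum_mono) auto
qed

lemma inner_self_strict_mono:
  fixes x y :: "real ^'n"
  assumes "\<And>i. 0 \<le> x $ i" and "\<And>i. x $ i \<le> y $ i" and "x $ k < y $ k"
  shows "x \<bullet> x < y \<bullet> y"
proof -
  have "x $ i * x $ i \<le> y $ i * y $ i" for i
    using assms(1,2)[of i] by (intro mult_mono) auto
  moreover have "x $ k * x $ k < y $ k * y $ k"
    using assms(1)[of k] assms(3) by (intro mult_strict_mono) auto
  ultimately show ?thesis
    unfolding inner_vec_def by (intro sum_strict_mono_ex1) auto
qed

lemma z_matrix_sub_neg_part_nonneg:
  fixes z :: "int ^'n"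
  defines "w \<equiv> \<chi> i. max 0 (- z $ i)"
  assumes "z_matrix L" and "nonneg_vec f" and "nonneg_vec (f + L *v z)"
  shows "nonneg_vec (f - L *v w)"
  unfolding nonneg_vec_def
proof
  fix i
  define p where "p = (\<chi> i. max 0 (z $ i))"
  have nonneg: "nonneg_vec w" "nonneg_vec p"
    unfolding w_def p_def nonneg_vec_def by auto
  show "(f - L *v w) $ i \<ge> 0"
  proof (cases "w $ i = 0")
    case True
    then have "(L *v w) $ i \<le> 0"
      using z_matrix_mult_nonpos[OF assms(2) nonneg(1)] by blast
    then show ?thesis
      using assms(3) unfolding nonneg_vec_def by (simp add: order_trans[of _ 0])
  next
    case False
    then have "(L *v p) $ i \<le> 0"
      using z_matrix_mult_nonpos[OF assms(2) nonneg(2)] unfolding w_def p_def by auto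
    moreover have "z = p - w"
      unfolding p_def w_def by (simp add: vec_eq_iff max_def)
    then have "f + L *v z = f + L *v p - L *v w"
      by (simp add: matrix_vector_mult_diff_distrib)
    then have "(f + L *v z) $ i = f $ i + (L *v p) $ i - (L *v w) $ i"
      by simp
    ultimately show ?thesis
      using assms(4) unfolding nonneg_vec_def by (simp add: le_diff_eq) (smt (verit))
  qed
qed

lemma z_superstable_shift_nonneg:
  assumes "z_superstable L f" and "z_matrix L" and "nonneg_vec (f + L *v z)"
  shows "nonneg_vec z"
proof -
  define w where "w = (\<chi> i. max 0 (- z $ i))"
  have "nonneg_vec (f - L *v w)"
    using z_matrix_sub_neg_part_nonneg assms unfolding w_def z_superstable_def by blast
  moreover have "nonneg_vec w"
    unfolding w_def nonneg_vec_def by simp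
  ultimately have "w = 0"
    using assms(1) unfolding z_superstable_def nonneg_vec_def
    by (metis diff_ge_0_iff_ge not_less vector_minus_component)
  have "0 \<le> z $ i" for i
  proof -
    have "max 0 (- z $ i) = 0"
      using \<open>w = 0\<close> unfolding w_def by (simp add: vec_eq_iff)
    then show ?thesis by linarith
  qed
  then show ?thesis
    unfolding nonneg_vec_def by blast
qed

lemma z_superstable_energy_minimal:
  assumes "nonsing_M_matrix L" and "z_superstable L f"
    and "L_equiv L f g" and "nonneg_vec g" and "g \<noteq> f"
  shows "energy L f < energy L g"
proof -
  have inv: "invertible (real_mat L)" and zm: "z_matrix L"
    using assms(1) unfolding nonsing_M_matrix_def by auto
  obtain z where g: "g = f + L *v z"
    using assms(3) unfolding L_equiv_def by (auto simp: diff_eq_eq add.commute)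
  have z_nonneg: "nonneg_vec z"
    using z_superstable_shift_nonneg assms(2,4) zm g by blast
  have "z \<noteq> 0"
    using assms(5) g by auto
  then obtain k where "z $ k \<noteq> 0"
    by (auto simp: vec_eq_iff)
  with z_nonneg have "z $ k > 0"
    unfolding nonneg_vec_def by (simp add: order_less_le)
  moreover have "0 \<le> L_solve L f $ i" for i
    using L_solve_nonneg assms(1,2) unfolding z_superstable_def by blast
  ultimately show ?thesis
    using z_nonneg unfolding energy_eq_L_solve g L_solve_shift[OF inv] nonneg_vec_def
    by (intro inner_self_strict_mono[where k = k]) (auto simp: real_vec_def)
qed

lemma energy_minimal_z_superstable:
  assumes "nonsing_M_matrix L" and "nonneg_vec f"
    and minimal: "\<And>g. L_equiv L f g \<Longrightarrow> nonneg_vec g \<Longrightarrow> g \<noteq> f \<Longrightarrow> energy L f < energy L g"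
  shows "z_superstable L f"
proof (rule ccontr)
  have inv: "invertible (real_mat L)"
    using assms(1) unfolding nonsing_M_matrix_def by auto
  assume "\<not> z_superstable L f"
  then obtain z where z_nonneg: "nonneg_vec z" and "z \<noteq> 0"
    and "\<forall>i. f $ i - (L *v z) $ i \<ge> 0"
    using assms(2) unfolding z_superstable_def by (auto simp: not_less)
  define g where "g = f - L *v z"
  have g_shift: "g = f + L *v (- z)"
    using matrix_vector_mult_diff_distrib[of L 0 z] unfolding g_def by simp
  have g_nonneg: "nonneg_vec g"
    using \<open>\<forall>i. f $ i - (L *v z) $ i \<ge> 0\<close> unfolding g_def nonneg_vec_def by simp
  have "g \<noteq> f"
    using matrix_vector_mult_eq_0D[OF inv, of z] \<open>z \<noteq> 0\<close> unfolding g_def by auto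
  moreover have "L_equiv L f g"
    unfolding L_equiv_def g_shift by auto
  ultimately have "energy L f < energy L g"
    using minimal g_nonneg by blast
  moreover have "energy L g \<le> energy L f"
    unfolding energy_eq_L_solve g_shift L_solve_shift[OF inv]
  proof (rule inner_self_mono)
    fix i
    show "0 \<le> (L_solve L f + real_vec (- z)) $ i"
      using L_solve_nonneg[OF assms(1) g_nonneg] unfolding g_shift L_solve_shift[OF inv] .
    show "(L_solve L f + real_vec (- z)) $ i \<le> L_solve L f $ i"
      using z_nonneg unfolding nonneg_vec_def by (simp add: real_vec_def)
  qed
  ultimately show False by linarith
qed

theorem mainTheorem5:
  fixes L :: "int ^'n ^'n" and f :: "int ^'n"
  assumes "nonsing_M_matrix L"
    and "nonneg_vec f"
  shows "z_superstable L f \<longleftrightarrow>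
    (\<forall>g :: int ^'n. L_equiv L f g \<and> nonneg_vec g \<and> g \<noteq> f \<longrightarrow> energy L f < energy L g)"
  using z_superstable_energy_minimal[OF assms(1)] energy_minimal_z_superstable[OF assms] by blast

end
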